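(* Let $m\equiv1\pmod 8$ be a square-free integer all of whose prime factors are $\equiv\pm1\pmod 8$. Then $m\equiv1\pmod{16}$ if and only if $\left(\frac{2+\sqrt2}{|m|}\right)=1$.
   Context: For each prime $p\equiv\pm1\pmod 8$, $2$ is a square modulo $p$; for $p\mid m$ choose $s_p$ with $s_p^2\equiv2\pmod p$. Then $\left(\frac{2+\sqrt2}{|m|}\right):=\prod_{p\mid m}\left(\frac{2+s_p}{p}\right)$ (product of Legendre symbols), which is independent of the choices of $s_p$ since $(2+s_p)(2-s_p)\equiv 2$ is a nonzero square mod $p$; equivalently it is $\prod_{p\mid m}(2+\sqrt2,|m|)_p$ with $\sqrt2\in\mathbb{Q}_p$ and $(\cdot,\cdot)_p$ the Hilbert symbol. *)

theory Defs
  imports "HOL-Number_Theory.Number_Theory" "HOL-Computational_Algebra.Squarefree"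
begin

text \<open>A chosen square root of 2 modulo p (meaningful when 2 is a square mod p).\<close>
definition sqrt2_mod :: "int \<Rightarrow> int" where
  "sqrt2_mod p = (SOME s. [s^2 = 2] (mod p))"

text \<open>The symbol ((2 + sqrt 2) / |m|) := product over primes p dividing m of
  Legendre (2 + s_p) p, with s_p a square root of 2 mod p.\<close>
definition jacobi_2_plus_sqrt2 :: "int \<Rightarrow> int" where
  "jacobi_2_plus_sqrt2 m = (\<Prod>p\<in>prime_factors \<bar>m\<bar>. Legendre (2 + sqrt2_mod p) p)"

end

theory Submission
  imports Defs
begin

text \<open>
  Let \<open>p = 8q \<plusminus> 1\<close> be prime and \<open>s\<^sup>2 \<equiv> 2 (mod p)\<close>. In \<open>\<int>[i]/p\<close>, which stands in for the
  field with \<open>p\<^sup>2\<close> elements, \<open>\<zeta> = (1 + i)/s\<close> is a primitive eighth root of unity with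
  \<open>\<zeta> + 1/\<zeta> = s\<close>, hence \<open>(1 + \<zeta>)\<^sup>2 = \<zeta> (2 + s)\<close>. The Frobenius \<open>z \<mapsto> z^p\<close> fixes \<open>\<zeta>\<close> if
  \<open>p \<equiv> 1\<close> and inverts it if \<open>p \<equiv> 7 (mod 8)\<close>; computing \<open>(1 + \<zeta>)^(p + 1)\<close> in two ways gives
  \<open>(2 + s)^((p + 1)/2) \<equiv> (-1)^q (2 + s)\<close>, so by Euler's criterion \<open>2 + s\<close> is a square modulo
  \<open>p\<close> iff \<open>p \<equiv> \<plusminus>1 (mod 16)\<close>. The same computation with \<open>i\<close> in place of \<open>\<zeta>\<close> shows that 2 is
  a square, so \<open>s\<close> exists. Finally, the sign that is 1 exactly on \<open>x \<equiv> \<plusminus>1 (mod 16)\<close> is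
  multiplicative on \<open>x \<equiv> \<plusminus>1 (mod 8)\<close> and even, so for squarefree \<open>m \<equiv> 1 (mod 8)\<close> the
  product over the prime factors of \<open>m\<close> is this sign at \<open>m\<close>, which is 1 iff \<open>m \<equiv> 1 (mod 16)\<close>.
\<close>

definition gauss_ints :: "complex set" where
  "gauss_ints = {z. Re z \<in> \<int> \<and> Im z \<in> \<int>}"

lemma gauss_ints_of_int [simp]: "of_int a \<in> gauss_ints"
  by (simp add: gauss_ints_def)

lemma gauss_ints_of_nat [simp]: "of_nat n \<in> gauss_ints"
  by (simp add: gauss_ints_def)

lemma gauss_ints_numeral [simp]: "numeral n \<in> gauss_ints"
  by (simp add: gauss_ints_def)

lemma gauss_ints_0 [simp]: "0 \<in> gauss_ints"
  and gauss_ints_1 [simp]: "1 \<in> gauss_ints"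
  and gauss_ints_i [simp]: "\<i> \<in> gauss_ints"
  by (simp_all add: gauss_ints_def)

lemma
  assumes "z \<in> gauss_ints" "w \<in> gauss_ints"
  shows gauss_ints_add [simp]: "z + w \<in> gauss_ints"
    and gauss_ints_diff [simp]: "z - w \<in> gauss_ints"
    and gauss_ints_mult [simp]: "z * w \<in> gauss_ints"
  using assms by (simp_all add: gauss_ints_def)

lemma
  assumes "z \<in> gauss_ints"
  shows gauss_ints_uminus [simp]: "- z \<in> gauss_ints"
    and gauss_ints_cnj [simp]: "cnj z \<in> gauss_ints"
  using assms by (simp_all add: gauss_ints_def)

lemma gauss_ints_power [simp]: "z \<in> gauss_ints \<Longrightarrow> z ^ n \<in> gauss_ints"
  by (induction n) simp_all

lemma gauss_ints_sum:
  "(\<And>k. k \<in> A \<Longrightarrow> f k \<in> gauss_ints) \<Longrightarrow> sum f A \<in> gauss_ints"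
  by (induction A rule: infinite_finite_induct) simp_all

lemma gauss_intsE:
  assumes "z \<in> gauss_ints"
  obtains a b :: int where "z = of_int a + \<i> * of_int b"
proof -
  from assms obtain a b where "Re z = of_int a" "Im z = of_int b"
    by (auto simp: gauss_ints_def elim!: Ints_cases)
  then have "z = of_int a + \<i> * of_int b"
    by (simp add: complex_eq_iff)
  then show thesis ..
qed

definition gauss_cong :: "int \<Rightarrow> complex \<Rightarrow> complex \<Rightarrow> bool" where
  "gauss_cong p z w \<longleftrightarrow> (\<exists>g\<in>gauss_ints. z - w = of_int p * g)"

lemma gauss_cong_refl [simp]: "gauss_cong p z z"
  unfolding gauss_cong_def by (intro bexI[of _ 0]) simp_all

lemma gauss_cong_sym: "gauss_cong p z w \<Longrightarrow> gauss_cong p w z"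
  unfolding gauss_cong_def by (auto intro!: bexI[of _ "- g" for g] simp: algebra_simps)

lemma gauss_cong_trans [trans]:
  "gauss_cong p x y \<Longrightarrow> gauss_cong p y z \<Longrightarrow> gauss_cong p x z"
  unfolding gauss_cong_def
proof (elim bexE)
  fix g h
  assume gh: "g \<in> gauss_ints" "h \<in> gauss_ints" "x - y = of_int p * g" "y - z = of_int p * h"
  have "x - z = (x - y) + (y - z)"
    by simp
  with gh show "\<exists>g\<in>gauss_ints. x - z = of_int p * g"
    by (intro bexI[of _ "g + h"]) (simp_all add: distrib_left)
qed

lemma gauss_cong_add:
  "gauss_cong p z z' \<Longrightarrow> gauss_cong p w w' \<Longrightarrow> gauss_cong p (z + w) (z' + w')"
  unfolding gauss_cong_def
proof (elim bexE)
  fix g h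
  assume gh: "g \<in> gauss_ints" "h \<in> gauss_ints" "z - z' = of_int p * g" "w - w' = of_int p * h"
  have "z + w - (z' + w') = (z - z') + (w - w')"
    by simp
  with gh show "\<exists>g\<in>gauss_ints. z + w - (z' + w') = of_int p * g"
    by (intro bexI[of _ "g + h"]) (simp_all add: distrib_left)
qed

lemma gauss_cong_diff:
  "gauss_cong p z z' \<Longrightarrow> gauss_cong p w w' \<Longrightarrow> gauss_cong p (z - w) (z' - w')"
  unfolding gauss_cong_def
proof (elim bexE)
  fix g h
  assume gh: "g \<in> gauss_ints" "h \<in> gauss_ints" "z - z' = of_int p * g" "w - w' = of_int p * h"
  have "z - w - (z' - w') = (z - z') - (w - w')"
    by simp
  with gh show "\<exists>g\<in>gauss_ints. z - w - (z' - w') = of_int p * g"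
    by (intro bexI[of _ "g - h"]) (simp_all add: right_diff_distrib)
qed

lemma gauss_cong_mult:
  assumes "gauss_cong p z z'" "gauss_cong p w w'" "z \<in> gauss_ints" "w' \<in> gauss_ints"
  shows "gauss_cong p (z * w) (z' * w')"
proof -
  from assms(1,2) obtain g h where gh: "g \<in> gauss_ints" "h \<in> gauss_ints"
    "z - z' = of_int p * g" "w - w' = of_int p * h"
    unfolding gauss_cong_def by blast
  then have "z * w - z' * w' = of_int p * (z * h + g * w')"
    by (simp add: algebra_simps flip: gh(3,4))
  with gh(1,2) assms(3,4) show ?thesis
    unfolding gauss_cong_def by (intro bexI[of _ "z * h + g * w'"]) simp_all
qed

lemma gauss_cong_mult_left:
  "gauss_cong p z w \<Longrightarrow> c \<in> gauss_ints \<Longrightarrow> w \<in> gauss_ints \<Longrightarrow>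
    gauss_cong p (c * z) (c * w)"
  by (rule gauss_cong_mult) simp_all

lemma gauss_cong_power:
  "gauss_cong p z w \<Longrightarrow> z \<in> gauss_ints \<Longrightarrow> w \<in> gauss_ints \<Longrightarrow>
    gauss_cong p (z ^ n) (w ^ n)"
  by (induction n) (simp_all add: gauss_cong_mult)

lemma gauss_cong_of_int_iff: "gauss_cong p (of_int a) (of_int b) \<longleftrightarrow> [a = b] (mod p)"
proof
  assume "gauss_cong p (of_int a) (of_int b)"
  then obtain g where g: "g \<in> gauss_ints" "of_int a - of_int b = of_int p * g"
    unfolding gauss_cong_def by blast
  from g(1) obtain k where "Re g = of_int k"
    by (auto simp: gauss_ints_def elim!: Ints_cases)
  with arg_cong[where f = Re, OF g(2)] have "real_of_int (a - b) = real_of_int (p * k)"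
    by simp
  then show "[a = b] (mod p)"
    by (simp only: of_int_eq_iff cong_iff_dvd_diff) simp
next
  assume "[a = b] (mod p)"
  then obtain k where "a - b = p * k"
    by (auto simp: cong_iff_dvd_diff elim!: dvdE)
  then show "gauss_cong p (of_int a) (of_int b)"
    unfolding gauss_cong_def
    by (intro bexI[of _ "of_int k"]) (simp_all flip: of_int_diff of_int_mult)
qed

lemma gauss_cong_mult_cancel:
  assumes "gauss_cong p (u * z) (u * w)" "gauss_cong p (u * v) 1"
    and "u \<in> gauss_ints" "v \<in> gauss_ints" "z \<in> gauss_ints" "w \<in> gauss_ints"
  shows "gauss_cong p z w"
proof -
  have "gauss_cong p z (u * v * z)"
    using gauss_cong_mult[OF gauss_cong_sym[OF assms(2)] gauss_cong_refl[of p z]] assms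
    by simp
  also have "gauss_cong p (u * v * z) (u * v * w)"
    using gauss_cong_mult_left[OF assms(1), of v] assms by (simp add: ac_simps)
  also have "gauss_cong p (u * v * w) w"
    using gauss_cong_mult[OF assms(2) gauss_cong_refl[of p w]] assms by simp
  finally show ?thesis .
qed

lemma fermat_little_int:
  fixes a :: int
  assumes "prime p"
  shows "[a ^ p = a] (mod int p)"
proof (cases "int p dvd a")
  case True
  moreover have "a dvd a ^ p"
    using prime_gt_0_nat[OF assms] by (simp add: dvd_power)
  ultimately show ?thesis
    by (simp add: cong_iff_dvd_diff dvd_trans)
next
  case False
  have "0 < p"
    using assms prime_gt_0_nat by blast
  define b where "b = nat (a mod int p)"
  have ab: "[a = int b] (mod int p)"
    using \<open>0 < p\<close> by (simp add: b_def cong_def)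
  have "\<not> p dvd b"
    using False cong_dvd_iff[OF ab] int_dvd_int_iff by blast
  have "[a ^ (p - 1) = int b ^ (p - 1)] (mod int p)"
    using ab by (rule cong_pow)
  also have "[int b ^ (p - 1) = 1] (mod int p)"
    using fermat_theorem[OF assms \<open>\<not> p dvd b\<close>] cong_int_iff[of "b ^ (p - 1)" 1 p]
    by simp
  finally have "[a * a ^ (p - 1) = a * 1] (mod int p)"
    by (rule cong_scalar_left)
  moreover have "a * a ^ (p - 1) = a ^ p"
    using \<open>0 < p\<close> by (cases p) simp_all
  ultimately show ?thesis
    by simp
qed

lemma gauss_cong_add_power_prime:
  assumes "prime p" "x \<in> gauss_ints" "y \<in> gauss_ints"
  shows "gauss_cong (int p) ((x + y) ^ p) (x ^ p + y ^ p)"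
proof -
  define c where "c k = of_nat ((p choose k) div p) * x ^ k * y ^ (p - k)" for k
  have "0 < p"
    using assms(1) prime_gt_0_nat by blast
  have middle: "of_nat (p choose k) * x ^ k * y ^ (p - k) = of_int (int p) * c k"
    if "k \<in> {1..<p}" for k
  proof -
    have "p dvd (p choose k)"
      using that assms(1) by (intro dvd_choose_prime) auto
    then show ?thesis
      using \<open>0 < p\<close> by (auto simp: c_def elim!: dvdE)
  qed
  have "{..p} = insert 0 (insert p {1..<p})"
    using \<open>0 < p\<close> by auto
  then have "(x + y) ^ p =
      y ^ p + (x ^ p + (\<Sum>k\<in>{1..<p}. of_nat (p choose k) * x ^ k * y ^ (p - k)))"
    using \<open>0 < p\<close> by (simp add: binomial_ring)
  also have "\<dots> = x ^ p + y ^ p + of_int (int p) * sum c {1..<p}"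
    by (simp add: sum_distrib_left middle)
  finally show ?thesis
    unfolding gauss_cong_def using assms
    by (intro bexI[of _ "sum c {1..<p}"] gauss_ints_sum) (simp_all add: c_def)
qed

lemma gauss_cong_power_prime:
  assumes "prime p" "odd p" "z \<in> gauss_ints"
  shows "gauss_cong (int p) (z ^ p) (if p mod 4 = 1 then z else cnj z)"
proof -
  obtain a b where z: "z = of_int a + \<i> * of_int b"
    using assms(3) by (rule gauss_intsE)
  have "\<i> ^ p = \<i> * \<i> ^ (p - 1)"
    using assms(2) by (cases p) simp_all
  moreover have "even ((p - 1) div 2) \<longleftrightarrow> p mod 4 = 1"
    using assms(2) by presburger
  ultimately have i_pow: "\<i> ^ p = (if p mod 4 = 1 then \<i> else - \<i>)"
    using assms(2) by (simp add: minus_one_power_iff)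
  have "gauss_cong (int p) (z ^ p) (of_int a ^ p + (\<i> * of_int b) ^ p)"
    unfolding z by (rule gauss_cong_add_power_prime[OF assms(1)]) simp_all
  also have "of_int a ^ p + (\<i> * of_int b) ^ p = of_int (a ^ p) + \<i> ^ p * of_int (b ^ p)"
    by (simp add: power_mult_distrib)
  also have "gauss_cong (int p) \<dots> (of_int a + \<i> ^ p * of_int b)"
    using fermat_little_int[OF assms(1)]
    by (intro gauss_cong_add gauss_cong_mult_left)
      (simp_all add: gauss_cong_of_int_iff flip: of_int_power)
  also have "of_int a + \<i> ^ p * of_int b = (if p mod 4 = 1 then z else cnj z)"
    by (simp add: z i_pow complex_eq_iff)
  finally show ?thesis .
qed

text \<open>Since \<open>\<omega> cnj \<omega> \<equiv> 1\<close>, both \<open>(1 + \<omega>)\<^sup>2 \<equiv> \<omega> a\<close> and \<open>(1 + \<omega>) (1 + cnj \<omega>) \<equiv> a\<close>; the Frobenius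
  sends \<open>1 + \<omega>\<close> to itself or to its conjugate, so \<open>(1 + \<omega>) ^ (p + 1)\<close> is \<open>\<equiv> \<omega> a\<close> or \<open>\<equiv> a\<close>.\<close>

lemma trace_power_cong:
  assumes p: "prime p" "p = 8 * q + 1 \<or> p + 1 = 8 * q"
    and \<omega>: "\<omega> \<in> gauss_ints" "gauss_cong (int p) (\<omega> * cnj \<omega>) 1"
    and a: "gauss_cong (int p) (2 + \<omega> + cnj \<omega>) (of_int a)"
  shows "gauss_cong (int p) (\<omega> ^ (4 * q) * of_int a ^ ((p + 1) div 2)) (of_int a)"
proof -
  define u where "u = 1 + \<omega>"
  define n where "n = (p + 1) div 2"
  have "odd p"
    using p(2) by presburger
  have u: "u \<in> gauss_ints"
    using \<omega>(1) by (simp add: u_def)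
  have square: "gauss_cong (int p) (u ^ 2) (\<omega> * of_int a)"
  proof -
    have "u ^ 2 = \<omega> * (2 + \<omega> + cnj \<omega>) - (\<omega> * cnj \<omega> - 1)"
      by (simp add: u_def algebra_simps power2_eq_square)
    also have "gauss_cong (int p) \<dots> (\<omega> * of_int a - (1 - 1))"
      using \<omega> a by (intro gauss_cong_diff gauss_cong_mult_left) simp_all
    finally show ?thesis
      by simp
  qed
  have norm: "gauss_cong (int p) (u * cnj u) (of_int a)"
  proof -
    have "u * cnj u = (2 + \<omega> + cnj \<omega>) + (\<omega> * cnj \<omega> - 1)"
      by (simp add: u_def algebra_simps)
    also have "gauss_cong (int p) \<dots> (of_int a + (1 - 1))"
      using \<omega> a by (intro gauss_cong_add gauss_cong_diff) simp_all
    finally show ?thesis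
      by simp
  qed
  have "p + 1 = 2 * n"
    using \<open>odd p\<close> unfolding n_def by presburger
  then have "u ^ (p + 1) = (u ^ 2) ^ n"
    by (simp only: power_mult)
  then have "gauss_cong (int p) (u ^ (p + 1)) (\<omega> ^ n * of_int a ^ n)"
    using gauss_cong_power[OF square] \<omega>(1) u by (simp add: power_mult_distrib)
  moreover have "gauss_cong (int p) (u ^ (p + 1)) (u * (if p mod 4 = 1 then u else cnj u))"
    using gauss_cong_mult_left[OF gauss_cong_power_prime[OF p(1) \<open>odd p\<close> u], of u] u
    by simp
  ultimately have frobenius:
    "gauss_cong (int p) (\<omega> ^ n * of_int a ^ n) (u * (if p mod 4 = 1 then u else cnj u))"
    by (rule gauss_cong_trans[OF gauss_cong_sym])
  from p(2) show ?thesis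
  proof
    assume "p = 8 * q + 1"
    then have "n = Suc (4 * q)" "p mod 4 = 1"
      unfolding n_def by presburger+
    with frobenius have "gauss_cong (int p) (\<omega> * (\<omega> ^ (4 * q) * of_int a ^ n)) (u ^ 2)"
      by (simp add: mult.assoc power2_eq_square)
    with square have "gauss_cong (int p) (\<omega> * (\<omega> ^ (4 * q) * of_int a ^ n)) (\<omega> * of_int a)"
      by (rule gauss_cong_trans[rotated])
    then show ?thesis
      unfolding n_def using \<omega>(2) by (rule gauss_cong_mult_cancel) (simp_all add: \<omega>(1))
  next
    assume "p + 1 = 8 * q"
    then have "n = 4 * q" "p mod 4 \<noteq> 1"
      unfolding n_def by presburger+
    with frobenius have "gauss_cong (int p) (\<omega> ^ (4 * q) * of_int a ^ n) (u * cnj u)"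
      by simp
    from this norm show ?thesis
      unfolding n_def by (rule gauss_cong_trans)
  qed
qed

lemma Legendre_eqI:
  assumes "prime p" "2 < p" "\<not> int p dvd a" "e \<in> {1, -1}"
    and "[e * a ^ ((p + 1) div 2) = a] (mod int p)"
  shows "Legendre a (int p) = e"
proof -
  have "coprime a (int p)"
    using assms(1,3) prime_imp_coprime[of "int p" a] by (simp add: coprime_commute)
  have "odd p"
    using assms(1,2) prime_odd_nat by blast
  then have "(p + 1) div 2 = Suc ((p - 1) div 2)"
    by presburger
  with assms(5) have "[(e * a ^ ((p - 1) div 2)) * a = 1 * a] (mod int p)"
    by (simp add: ac_simps)
  then have "[e * a ^ ((p - 1) div 2) = 1] (mod int p)"
    using cong_mult_rcancel[OF \<open>coprime a (int p)\<close>] by blast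
  then have "[e * (e * a ^ ((p - 1) div 2)) = e * 1] (mod int p)"
    by (rule cong_scalar_left)
  moreover have "e * e = 1"
    using assms(4) by auto
  ultimately have "[a ^ ((p - 1) div 2) = e] (mod int p)"
    by (simp add: mult.assoc[symmetric])
  with euler_criterion[OF assms(1,2)] have "int p dvd Legendre a (int p) - e"
    using cong_trans cong_iff_dvd_diff by blast
  moreover have "\<bar>Legendre a (int p) - e\<bar> \<le> 2"
    using assms(4) by (auto simp: Legendre_def)
  ultimately show ?thesis
    using assms(2) dvd_imp_le_int[of "Legendre a (int p) - e" "int p"]
    by (cases "Legendre a (int p) = e") auto
qed

lemma prime_gt_2_if_pm1_mod_8:
  fixes p q :: nat
  assumes "prime p" "p = 8 * q + 1 \<or> p + 1 = 8 * q"
  shows "2 < p"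
proof -
  have "p \<noteq> 2"
    using assms(2) by presburger
  then show ?thesis
    using prime_ge_2_nat[OF assms(1)] by linarith
qed

lemma QuadRes_two:
  assumes "prime p" "p = 8 * q + 1 \<or> p + 1 = 8 * q"
  shows "QuadRes (int p) 2"
proof -
  have "2 < p"
    using prime_gt_2_if_pm1_mod_8[OF assms] .
  have "gauss_cong (int p) (\<i> ^ (4 * q) * of_int 2 ^ ((p + 1) div 2)) (of_int 2)"
    by (rule trace_power_cong[OF assms]) simp_all
  moreover have "\<i> ^ (4 * q) = 1"
    by (simp add: power_mult)
  ultimately have "[1 * 2 ^ ((p + 1) div 2) = 2] (mod int p)"
    by (simp flip: gauss_cong_of_int_iff)
  then have "Legendre 2 (int p) = 1"
    using \<open>2 < p\<close> by (intro Legendre_eqI[OF assms(1)]) (auto dest: zdvd_imp_le)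
  then show ?thesis
    by (auto simp: Legendre_def split: if_splits)
qed

text \<open>The witness is \<open>\<zeta> = (1 + \<i>) s / 2\<close>, with division by 2 realised as multiplication by
  \<open>(p + 1) div 2\<close>.\<close>

lemma eighth_root_of_unity_mod:
  assumes "odd p" "[s ^ 2 = 2] (mod int p)"
  obtains \<zeta> where "\<zeta> \<in> gauss_ints" "gauss_cong (int p) (\<zeta> * cnj \<zeta>) 1"
    "gauss_cong (int p) (\<zeta> ^ 2) \<i>" "gauss_cong (int p) (2 + \<zeta> + cnj \<zeta>) (of_int (2 + s))"
proof
  define h where "h = int ((p + 1) div 2)"
  define \<zeta> where "\<zeta> = of_int (h * s) * (1 + \<i>)"
  have "2 * ((p + 1) div 2) = p + 1"
    using assms(1) by presburger
  then have half: "[2 * h = 1] (mod int p)"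
    unfolding h_def cong_iff_dvd_diff
    by (metis add_diff_cancel_right' dvd_refl of_nat_1 of_nat_add of_nat_mult of_nat_numeral)
  have "[2 * h ^ 2 * s ^ 2 = 2 * h ^ 2 * 2] (mod int p)"
    using assms(2) by (rule cong_scalar_left)
  also have "2 * h ^ 2 * 2 = (2 * h) ^ 2"
    by (simp add: power2_eq_square)
  also have "[(2 * h) ^ 2 = 1 ^ 2] (mod int p)"
    using half by (rule cong_pow)
  finally have "gauss_cong (int p) (of_int (2 * h ^ 2 * s ^ 2)) (of_int 1)"
    by (simp only: gauss_cong_of_int_iff power_one)
  moreover have "\<zeta> * cnj \<zeta> = of_int (2 * h ^ 2 * s ^ 2)"
    and "\<zeta> ^ 2 = \<i> * of_int (2 * h ^ 2 * s ^ 2)"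
    by (simp_all add: \<zeta>_def complex_eq_iff power2_eq_square algebra_simps)
  ultimately show "gauss_cong (int p) (\<zeta> * cnj \<zeta>) 1" "gauss_cong (int p) (\<zeta> ^ 2) \<i>"
    using gauss_cong_mult_left[of "int p" "of_int (2 * h ^ 2 * s ^ 2)" "of_int 1" \<i>] by simp_all
  have "2 + \<zeta> + cnj \<zeta> = of_int (2 + 2 * h * s)"
    by (simp add: \<zeta>_def complex_eq_iff)
  moreover have "[2 + 2 * h * s = 2 + s] (mod int p)"
    using cong_add[OF cong_refl[of 2] cong_scalar_right[OF half, of s]] by simp
  ultimately show "gauss_cong (int p) (2 + \<zeta> + cnj \<zeta>) (of_int (2 + s))"
    by (simp only: gauss_cong_of_int_iff)
  show "\<zeta> \<in> gauss_ints"
    by (simp add: \<zeta>_def)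
qed

lemma prime_not_dvd_two_plus_sqrt2:
  assumes "2 < p" "[s ^ 2 = 2] (mod int p)"
  shows "\<not> int p dvd 2 + s"
proof
  assume "int p dvd 2 + s"
  then have "[(2 + s) * (2 - s) = 0] (mod int p)"
    by (simp add: cong_0_iff)
  moreover have "[(2 + s) * (2 - s) = 2] (mod int p)"
    using cong_diff[OF cong_refl[of 4] assms(2)] by (simp add: algebra_simps power2_eq_square)
  ultimately have "[0 = 2] (mod int p)"
    by (rule cong_trans[OF cong_sym])
  then have "int p dvd 2"
    by (simp add: cong_iff_dvd_diff)
  with \<open>2 < p\<close> show False
    by (auto dest: zdvd_imp_le)
qed

lemma Legendre_two_plus_sqrt2:
  assumes p: "prime p" "p = 8 * q + 1 \<or> p + 1 = 8 * q" and s: "[s ^ 2 = 2] (mod int p)"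
  shows "Legendre (2 + s) (int p) = (-1) ^ q"
proof -
  define n where "n = (p + 1) div 2"
  have "2 < p"
    using prime_gt_2_if_pm1_mod_8[OF p] .
  then have "odd p"
    using p(1) prime_odd_nat by blast
  obtain \<zeta> where \<zeta>: "\<zeta> \<in> gauss_ints" "gauss_cong (int p) (\<zeta> * cnj \<zeta>) 1"
      "gauss_cong (int p) (\<zeta> ^ 2) \<i>"
    and trace: "gauss_cong (int p) (2 + \<zeta> + cnj \<zeta>) (of_int (2 + s))"
    using eighth_root_of_unity_mod[OF \<open>odd p\<close> s] .
  have "gauss_cong (int p) ((\<zeta> ^ 2) ^ (2 * q)) (\<i> ^ (2 * q))"
    using \<zeta> by (intro gauss_cong_power) simp_all
  moreover have "(\<zeta> ^ 2) ^ (2 * q) = \<zeta> ^ (4 * q)"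
    by (simp flip: power_mult)
  moreover have "\<i> ^ (2 * q) = (-1) ^ q"
    by (simp add: power_mult)
  ultimately have "gauss_cong (int p) (\<zeta> ^ (4 * q)) ((-1) ^ q)"
    by simp
  then have "gauss_cong (int p) ((-1) ^ q) (\<zeta> ^ (4 * q))"
    by (rule gauss_cong_sym)
  then have "gauss_cong (int p)
      ((-1) ^ q * of_int (2 + s) ^ n) (\<zeta> ^ (4 * q) * of_int (2 + s) ^ n)"
    by (rule gauss_cong_mult) simp_all
  also have "gauss_cong (int p) \<dots> (of_int (2 + s))"
    unfolding n_def using trace_power_cong[OF p \<zeta>(1,2) trace] .
  finally have "[(-1) ^ q * (2 + s) ^ n = 2 + s] (mod int p)"
    by (simp flip: gauss_cong_of_int_iff)
  moreover have "(-1) ^ q \<in> {1, -1 :: int}"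
    by (cases "even q") simp_all
  ultimately show ?thesis
    unfolding n_def
    by (intro Legendre_eqI[OF p(1) \<open>2 < p\<close> prime_not_dvd_two_plus_sqrt2[OF \<open>2 < p\<close> s]])
qed

definition chi16 :: "int \<Rightarrow> int" where
  "chi16 x = (if x mod 16 \<in> {1, 15} then 1 else -1)"

lemma mod_16_via_mod_8: "x mod 16 = 8 * (x div 8 mod 2) + x mod (8 :: int)"
  using zmod_zmult2_eq[of 2 x 8] by simp

lemma mod_16_cases:
  fixes x :: int
  assumes "x mod 8 \<in> {1, 7}"
  shows "x mod 16 \<in> {1, 7, 9, 15}"
  using assms mod_16_via_mod_8[of x] by (auto simp: mod2_eq_if)

lemma mod_8_mult_closed:
  fixes x y :: int
  assumes "x mod 8 \<in> {1, 7}" "y mod 8 \<in> {1, 7}"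
  shows "(x * y) mod 8 \<in> {1, 7}"
proof -
  have "(x * y) mod 8 = ((x mod 8) * (y mod 8)) mod 8"
    by (simp add: mod_mult_eq)
  with assms show ?thesis
    by auto
qed

lemma prod_mod_8_closed:
  fixes A :: "int set"
  assumes "\<forall>x\<in>A. x mod 8 \<in> {1, 7}"
  shows "(\<Prod>A) mod 8 \<in> {1, 7}"
  using assms
proof (induction A rule: infinite_finite_induct)
  case (insert x A)
  then show ?case
    using mod_8_mult_closed[of x "\<Prod>A"] by simp
qed simp_all

lemma chi16_mult:
  assumes "x mod 8 \<in> {1, 7}" "y mod 8 \<in> {1, 7}"
  shows "chi16 (x * y) = chi16 x * chi16 y"
proof -
  define r t where "r = x mod 16" and "t = y mod 16"
  have "(x * y) mod 16 = (r * t) mod 16"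
    by (simp add: r_def t_def mod_mult_eq)
  moreover have "r \<in> {1, 7, 9, 15}" "t \<in> {1, 7, 9, 15}"
    using mod_16_cases[OF assms(1)] mod_16_cases[OF assms(2)] by (simp_all add: r_def t_def)
  ultimately show ?thesis
    unfolding chi16_def r_def[symmetric] t_def[symmetric] by auto
qed

lemma chi16_prod:
  assumes "\<forall>x\<in>A. x mod 8 \<in> {1, 7}"
  shows "chi16 (\<Prod>A) = (\<Prod>x\<in>A. chi16 x)"
  using assms
proof (induction A rule: infinite_finite_induct)
  case (insert x A)
  then show ?case
    using chi16_mult[of x "\<Prod>A"] prod_mod_8_closed[of A] by simp
qed (simp_all add: chi16_def)

lemma chi16_abs: "chi16 \<bar>x\<bar> = chi16 x"
  by (auto simp: chi16_def abs_if zmod_zminus1_eq_if)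

lemma chi16_of_nat:
  assumes "p = 8 * q + 1 \<or> p + 1 = 8 * q"
  shows "chi16 (int p) = (-1) ^ q"
  using assms
proof
  assume "p = 8 * q + 1"
  then have "int p mod 16 = 8 * (int q mod 2) + 1"
    using mod_16_via_mod_8[of "int p"] by simp
  then show ?thesis
    by (simp add: chi16_def minus_one_power_iff mod2_eq_if)
next
  assume "p + 1 = 8 * q"
  then obtain r where r: "q = Suc r" "int p = 8 * int r + 7"
    by (cases q) simp_all
  then have "int p mod 16 = 8 * (int r mod 2) + 7"
    using mod_16_via_mod_8[of "int p"] by simp
  then show ?thesis
    by (simp add: r(1) chi16_def minus_one_power_iff mod2_eq_if)
qed

lemma pm1_mod_8E:
  fixes p :: nat
  assumes "p mod 8 = 1 \<or> p mod 8 = 7"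
  obtains q where "p = 8 * q + 1 \<or> p + 1 = 8 * q"
  using assms
proof
  assume "p mod 8 = 1"
  then have "p = 8 * (p div 8) + 1"
    using div_mult_mod_eq[of p 8] by linarith
  then show thesis
    using that by blast
next
  assume "p mod 8 = 7"
  then have "p + 1 = 8 * (p div 8 + 1)"
    unfolding distrib_left using div_mult_mod_eq[of p 8] by linarith
  then show thesis
    using that by blast
qed

lemma Legendre_two_plus_sqrt2_mod:
  fixes p :: int
  assumes "prime p" "[p = 1] (mod 8) \<or> [p = -1] (mod 8)"
  shows "Legendre (2 + sqrt2_mod p) p = chi16 p"
proof -
  obtain n where n: "p = int n"
    using prime_ge_0_int[OF assms(1)] nonneg_int_cases by blast
  have "prime n"
    using assms(1) n by simp
  have "int (n mod 8) = int n mod 8"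
    by (simp add: of_nat_mod)
  then have "n mod 8 = 1 \<or> n mod 8 = 7"
    using assms(2) unfolding n cong_def by auto
  then obtain q where q: "n = 8 * q + 1 \<or> n + 1 = 8 * q"
    by (rule pm1_mod_8E)
  have "QuadRes p 2"
    using QuadRes_two[OF \<open>prime n\<close> q] n by simp
  then have "[sqrt2_mod p ^ 2 = 2] (mod p)"
    unfolding sqrt2_mod_def QuadRes_def by (rule someI_ex)
  then show ?thesis
    using Legendre_two_plus_sqrt2[OF \<open>prime n\<close> q] chi16_of_nat[OF q] n by simp
qed

lemma squarefree_prod_prime_factors:
  fixes n :: "'a :: factorial_semiring_multiplicative"
  assumes "squarefree n"
  shows "\<Prod>(prime_factors n) = normalize n"
proof -
  have "n \<noteq> 0"
    using assms by auto
  with assms have "\<forall>p\<in>prime_factors n. multiplicity p n = 1"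
    using squarefree_factorial_semiring' by blast
  then show ?thesis
    using prod_prime_factors[OF \<open>n \<noteq> 0\<close>] by simp
qed

theorem lemma5p4:
  fixes m :: int
  assumes "[m = 1] (mod 8)"
    and "squarefree m"
    and "\<forall>p\<in>prime_factors m. [p = 1] (mod 8) \<or> [p = -1] (mod 8)"
  shows "[m = 1] (mod 16) \<longleftrightarrow> jacobi_2_plus_sqrt2 m = 1"
proof -
  have factors: "\<forall>p\<in>prime_factors m. p mod 8 \<in> {1, 7}"
    using assms(3) unfolding cong_def by auto
  have "prime_factors \<bar>m\<bar> = prime_factors m"
    using prime_factorization_normalize[of m] by simp
  then have "jacobi_2_plus_sqrt2 m = (\<Prod>p\<in>prime_factors m. chi16 p)"
    unfolding jacobi_2_plus_sqrt2_def using assms(3)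
    by (intro prod.cong) (auto intro: Legendre_two_plus_sqrt2_mod in_prime_factors_imp_prime)
  also have "\<dots> = chi16 (\<Prod>(prime_factors m))"
    using factors by (simp add: chi16_prod)
  also have "\<dots> = chi16 m"
    using squarefree_prod_prime_factors[OF assms(2)] by (simp add: chi16_abs)
  finally have "jacobi_2_plus_sqrt2 m = chi16 m" .
  moreover have "m mod 16 \<in> {1, 9}"
    using assms(1) mod_16_via_mod_8[of m] unfolding cong_def by (auto simp: mod2_eq_if)
  ultimately show ?thesis
    by (auto simp: chi16_def cong_def)
qed

end
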